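(* Let $X$ be a topological space, $D$ a countable set, and $\mathcal{I}\subseteq P(D)$ an ideal. Suppose that for every family $\{f_d\}_{d\in D}$ of pairwise distinct continuous real-valued functions on $X$ which $\mathcal{I}$-converges to $0$, there is $A\in\mathcal{I}^*$ such that $\{f_d\}_{d\in A}$ converges pointwise to $0$. Then $X$ has the $\mathcal{I}$-convergence property (i.e., the same conclusion holds for all families $\{f_d\}_{d\in D}$ of continuous real-valued functions, not necessarily distinct, which $\mathcal{I}$-converge to $0$).
   Context: An ideal $\mathcal{I}\subseteq P(D)$ contains all singletons and is closed under subsets and finite unions; $\mathcal{I}^*=\{D\setminus A:A\in\mathcal{I}\}$ is its dual filter. A family of reals $\{r_d\}_{d\in D}$ $\mathcal{I}$-converges to $0$ if for each $\epsilon>0$, $\{d\in D:|r_d|<\epsilon\}\in\mathcal{I}^*$. A family $\{f_d\}_{d\in D}$ of real-valued functions on $X$ $\mathcal{I}$-converges to $0$ if $\{f_d(x)\}_{d\in D}$ $\mathcal{I}$-converges to $0$ for each $x\in X$. For infinite $A\subseteq D$, $\{f_d\}_{d\in A}$ converges pointwise to $0$ means that for each $x$ and $\epsilon>0$, $|f_d(x)|\ge\epsilon$ for only finitely many $d\in A$. $X$ has the $\mathcal{I}$-convergence property if for every family $\{f_d\}_{d\in D}$ of continuous real-valued functions on $X$ which $\mathcal{I}$-converges to $0$ there is $A\in\mathcal{I}^*$ such that $\{f_d\}_{d\in A}$ converges pointwise to $0$. *)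

theory Defs
  imports "HOL-Analysis.Analysis"
begin

definition is_ideal :: "'d set \<Rightarrow> 'd set set \<Rightarrow> bool" where
  "is_ideal D I \<longleftrightarrow>
     I \<subseteq> Pow D \<and>
     {} \<in> I \<and>
     (\<forall>d\<in>D. {d} \<in> I) \<and>
     (\<forall>A\<in>I. \<forall>B. B \<subseteq> A \<longrightarrow> B \<in> I) \<and>
     (\<forall>A\<in>I. \<forall>B\<in>I. A \<union> B \<in> I)"

definition dual_filter :: "'d set \<Rightarrow> 'd set set \<Rightarrow> 'd set set" where
  "dual_filter D I = (\<lambda>A. D - A) ` I"

definition I_conv_zero :: "'d set \<Rightarrow> 'd set set \<Rightarrow> ('d \<Rightarrow> real) \<Rightarrow> bool" where
  "I_conv_zero D I r \<longleftrightarrow> (\<forall>\<epsilon>>0. {d\<in>D. \<bar>r d\<bar> < \<epsilon>} \<in> dual_filter D I)"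

definition I_conv_zero_fun ::
    "'a topology \<Rightarrow> 'd set \<Rightarrow> 'd set set \<Rightarrow> ('d \<Rightarrow> 'a \<Rightarrow> real) \<Rightarrow> bool" where
  "I_conv_zero_fun X D I f \<longleftrightarrow> (\<forall>x\<in>topspace X. I_conv_zero D I (\<lambda>d. f d x))"

definition pointwise_conv_zero_on ::
    "'a topology \<Rightarrow> 'd set \<Rightarrow> ('d \<Rightarrow> 'a \<Rightarrow> real) \<Rightarrow> bool" where
  "pointwise_conv_zero_on X A f \<longleftrightarrow>
     (\<forall>x\<in>topspace X. \<forall>\<epsilon>>0. finite {d\<in>A. \<bar>f d x\<bar> \<ge> \<epsilon>})"

definition I_convergence_property :: "'a topology \<Rightarrow> 'd set \<Rightarrow> 'd set set \<Rightarrow> bool" where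
  "I_convergence_property X D I \<longleftrightarrow>
     (\<forall>f :: 'd \<Rightarrow> 'a \<Rightarrow> real.
        (\<forall>d\<in>D. continuous_map X euclideanreal (f d)) \<longrightarrow> I_conv_zero_fun X D I f \<longrightarrow>
        (\<exists>A\<in>dual_filter D I. pointwise_conv_zero_on X A f))"

end

theory Submission
  imports Defs
begin

(* Let f be any family of continuous functions I-converging to 0.  Perturb it
   by constants: g_d = f_d + c_d, where c : D -> R is "vanishing" (only finitely many |c_d|
   exceed any eps > 0).  Such perturbations change neither I-convergence to 0 (finite sets
   lie in I) nor pointwise convergence to 0 along a subfamily.  Because D is countable we can
   choose c so that the values g_d(x0) at one fixed point x0 are pairwise distinct: take an
   injective vanishing weight a_d > 0 and c = t * a for a real t outside the countable set of
   "collision" parameters.  Then the g_d are pairwise distinct, the hypothesis yields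
   A in I* with g converging pointwise along A, and f = g - c converges along A as well. *)

lemma dual_filter_iff:
  assumes "is_ideal D I"
  shows "B \<in> dual_filter D I \<longleftrightarrow> B \<subseteq> D \<and> D - B \<in> I"
proof
  assume "B \<in> dual_filter D I"
  then obtain C where "C \<in> I" "B = D - C" by (auto simp: dual_filter_def)
  moreover have "C \<subseteq> D" using assms \<open>C \<in> I\<close> unfolding is_ideal_def by auto
  ultimately show "B \<subseteq> D \<and> D - B \<in> I" by (simp add: Diff_Diff_Int inf.absorb2)
next
  assume "B \<subseteq> D \<and> D - B \<in> I"
  then show "B \<in> dual_filter D I"
    unfolding dual_filter_def by (auto intro!: image_eqI[of _ _ "D - B"])
qed

lemma ideal_contains_finite:
  assumes "is_ideal D I" "finite S" "S \<subseteq> D"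
  shows "S \<in> I"
  using assms(2,3)
proof (induction S rule: finite_induct)
  case empty
  then show ?case using assms(1) unfolding is_ideal_def by auto
next
  case (insert x F)
  then have "{x} \<in> I" "F \<in> I" using assms(1) unfolding is_ideal_def by auto
  then show ?case using assms(1) unfolding is_ideal_def by (metis insert_is_Un)
qed

lemma D_in_dual_filter:
  assumes "is_ideal D I"
  shows "D \<in> dual_filter D I"
  using assms by (simp add: dual_filter_iff) (simp add: is_ideal_def)

lemma dual_filter_Int_superset:
  assumes "is_ideal D I" "B1 \<in> dual_filter D I" "B2 \<in> dual_filter D I"
    and "B1 \<inter> B2 \<subseteq> B" "B \<subseteq> D"
  shows "B \<in> dual_filter D I"
proof -
  have "D - B1 \<in> I" "D - B2 \<in> I" using assms(1-3) dual_filter_iff by blast+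
  then have union: "(D - B1) \<union> (D - B2) \<in> I" using assms(1) unfolding is_ideal_def by auto
  have "D - B \<subseteq> (D - B1) \<union> (D - B2)" using assms(4) by auto
  then have "D - B \<in> I" using union assms(1) unfolding is_ideal_def by auto
  then show ?thesis using assms(1,5) dual_filter_iff by blast
qed

definition vanishing_on :: "'d set \<Rightarrow> ('d \<Rightarrow> real) \<Rightarrow> bool" where
  "vanishing_on A c \<longleftrightarrow> (\<forall>\<epsilon>>0. finite {d\<in>A. \<epsilon> \<le> \<bar>c d\<bar>})"

lemma pointwise_conv_zero_on_iff:
  "pointwise_conv_zero_on X A f \<longleftrightarrow> (\<forall>x\<in>topspace X. vanishing_on A (\<lambda>d. f d x))"
  unfolding pointwise_conv_zero_on_def vanishing_on_def by simp

lemma vanishing_on_subset: "vanishing_on D c \<Longrightarrow> A \<subseteq> D \<Longrightarrow> vanishing_on A c"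
  unfolding vanishing_on_def by (blast intro: finite_subset[rotated])

lemma vanishing_on_uminus: "vanishing_on A c \<Longrightarrow> vanishing_on A (\<lambda>d. - c d)"
  unfolding vanishing_on_def by simp

lemma vanishing_on_scale:
  assumes "vanishing_on A c"
  shows "vanishing_on A (\<lambda>d. t * c d)"
proof (cases "t = 0")
  case False
  show ?thesis unfolding vanishing_on_def
  proof (intro allI impI)
    fix \<epsilon> :: real assume "\<epsilon> > 0"
    then have "finite {d\<in>A. \<epsilon> / \<bar>t\<bar> \<le> \<bar>c d\<bar>}"
      using assms False unfolding vanishing_on_def by simp
    moreover have "\<epsilon> \<le> \<bar>t * c d\<bar> \<longleftrightarrow> \<epsilon> / \<bar>t\<bar> \<le> \<bar>c d\<bar>" for d
      using False by (simp add: abs_mult divide_le_eq mult.commute)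
    ultimately show "finite {d\<in>A. \<epsilon> \<le> \<bar>t * c d\<bar>}" by simp
  qed
qed (simp add: vanishing_on_def)

lemma vanishing_on_add:
  assumes "vanishing_on A r" "vanishing_on A c"
  shows "vanishing_on A (\<lambda>d. r d + c d)"
  unfolding vanishing_on_def
proof (intro allI impI)
  fix \<epsilon> :: real assume "\<epsilon> > 0"
  then have "\<epsilon>/2 > 0" by simp
  then have "finite ({d\<in>A. \<epsilon>/2 \<le> \<bar>r d\<bar>} \<union> {d\<in>A. \<epsilon>/2 \<le> \<bar>c d\<bar>})"
    using assms unfolding vanishing_on_def by blast
  moreover have "{d\<in>A. \<epsilon> \<le> \<bar>r d + c d\<bar>} \<subseteq> {d\<in>A. \<epsilon>/2 \<le> \<bar>r d\<bar>} \<union> {d\<in>A. \<epsilon>/2 \<le> \<bar>c d\<bar>}"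
    by auto
  ultimately show "finite {d\<in>A. \<epsilon> \<le> \<bar>r d + c d\<bar>}" by (rule finite_subset[rotated])
qed

text \<open>A vanishing perturbation preserves I-convergence to 0: the exceptional set of the
  perturbation is finite, hence in I.\<close>
lemma I_conv_zero_add_vanishing:
  assumes I: "is_ideal D I" and r: "I_conv_zero D I r" and c: "vanishing_on D c"
  shows "I_conv_zero D I (\<lambda>d. r d + c d)"
  unfolding I_conv_zero_def
proof (intro allI impI)
  fix \<epsilon> :: real assume "\<epsilon> > 0"
  then have small_r: "{d\<in>D. \<bar>r d\<bar> < \<epsilon>/2} \<in> dual_filter D I"
    using r unfolding I_conv_zero_def by (meson half_gt_zero)
  have "finite {d\<in>D. \<epsilon>/2 \<le> \<bar>c d\<bar>}"
    using c \<open>\<epsilon> > 0\<close> unfolding vanishing_on_def by (meson half_gt_zero)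
  then have "{d\<in>D. \<epsilon>/2 \<le> \<bar>c d\<bar>} \<in> I"
    by (rule ideal_contains_finite[OF I]) auto
  then have small_c: "D - {d\<in>D. \<epsilon>/2 \<le> \<bar>c d\<bar>} \<in> dual_filter D I"
    using I by (simp add: dual_filter_iff Diff_Diff_Int inf.absorb2)
  show "{d\<in>D. \<bar>r d + c d\<bar> < \<epsilon>} \<in> dual_filter D I"
    by (rule dual_filter_Int_superset[OF I small_r small_c]) auto
qed

lemma injective_vanishing_weight:
  assumes "countable D"
  obtains a :: "'d \<Rightarrow> real" where "inj_on a D" "vanishing_on D a"
proof
  define e where "e = to_nat_on D"
  have inj_e: "inj_on e D" unfolding e_def using assms by (rule inj_on_to_nat_on)
  define a where "a d = 1 / (real (e d) + 1)" for d
  show "inj_on a D"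
    using inj_e by (auto simp: a_def inj_on_def)
  show "vanishing_on D a" unfolding vanishing_on_def
  proof (intro allI impI)
    fix \<epsilon> :: real assume "\<epsilon> > 0"
    have "e ` {d\<in>D. \<epsilon> \<le> \<bar>a d\<bar>} \<subseteq> {..nat \<lceil>1 / \<epsilon>\<rceil>}"
    proof clarify
      fix d assume "\<epsilon> \<le> \<bar>a d\<bar>"
      then have "\<epsilon> * (real (e d) + 1) \<le> 1" by (simp add: a_def field_simps)
      then have "real (e d) \<le> 1 / \<epsilon>" using \<open>\<epsilon> > 0\<close> by (simp add: field_simps)
      then show "e d \<le> nat \<lceil>1 / \<epsilon>\<rceil>"
        by (metis ceiling_of_nat ceiling_mono nat_int nat_mono)
    qed
    then have "finite (e ` {d\<in>D. \<epsilon> \<le> \<bar>a d\<bar>})" by (rule finite_subset) simp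
    moreover have "inj_on e {d\<in>D. \<epsilon> \<le> \<bar>a d\<bar>}" using inj_e by (rule inj_on_subset) auto
    ultimately show "finite {d\<in>D. \<epsilon> \<le> \<bar>a d\<bar>}" by (rule finite_imageD)
  qed
qed

text \<open>Any countable family of reals can be made pairwise distinct by a vanishing
  perturbation t * a: only countably many parameters t produce a collision
  v d + t a d = v d' + t a d', and the reals are uncountable.\<close>
lemma separating_vanishing_perturbation:
  fixes v :: "'d \<Rightarrow> real"
  assumes "countable D"
  obtains c where "vanishing_on D c" "inj_on (\<lambda>d. v d + c d) D"
proof -
  obtain a where inj_a: "inj_on a D" and van_a: "vanishing_on D a"
    using injective_vanishing_weight[OF assms] .
  define collisions where
    "collisions = (\<lambda>(d, d'). (v d' - v d) / (a d - a d')) ` (D \<times> D)"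
  have "countable collisions" unfolding collisions_def using assms by simp
  then obtain t where t: "t \<notin> collisions"
    using uncountable_UNIV_real by (metis UNIV_eq_I countable_subset subset_UNIV)
  have "inj_on (\<lambda>d. v d + t * a d) D"
  proof (rule inj_onI, rule ccontr)
    fix d d' assume dd: "d \<in> D" "d' \<in> D" "v d + t * a d = v d' + t * a d'" "d \<noteq> d'"
    then have "a d \<noteq> a d'" using inj_a by (auto dest: inj_onD)
    then have "t = (v d' - v d) / (a d - a d')" using dd(3) by (simp add: field_simps)
    then show False using t dd(1,2) unfolding collisions_def by force
  qed
  then show thesis using that vanishing_on_scale[OF van_a] by blast
qed

theorem mainTheorem13:
  fixes X :: "'a topology" and D :: "'d set" and I :: "'d set set"
  assumes "countable D"
    and "is_ideal D I"
    and "\<And>f :: 'd \<Rightarrow> 'a \<Rightarrow> real.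
           (\<forall>d\<in>D. continuous_map X euclideanreal (f d)) \<Longrightarrow>
           inj_on (\<lambda>d. restrict (f d) (topspace X)) D \<Longrightarrow>
           I_conv_zero_fun X D I f \<Longrightarrow>
           \<exists>A\<in>dual_filter D I. pointwise_conv_zero_on X A f"
  shows "I_convergence_property X D I"
  unfolding I_convergence_property_def
proof (intro allI impI)
  fix f :: "'d \<Rightarrow> 'a \<Rightarrow> real"
  assume cont: "\<forall>d\<in>D. continuous_map X euclideanreal (f d)" and conv: "I_conv_zero_fun X D I f"
  show "\<exists>A\<in>dual_filter D I. pointwise_conv_zero_on X A f"
  proof (cases "topspace X = {}")
    case True
    then show ?thesis using D_in_dual_filter[OF assms(2)] by (auto simp: pointwise_conv_zero_on_def)
  next
    case False
    then obtain x0 where x0: "x0 \<in> topspace X" by blast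
    obtain c where van_c: "vanishing_on D c" and inj: "inj_on (\<lambda>d. f d x0 + c d) D"
      using separating_vanishing_perturbation[OF assms(1)] .
    define g where "g d x = f d x + c d" for d x
    have "\<forall>d\<in>D. continuous_map X euclideanreal (g d)"
      using cont unfolding g_def by (simp add: continuous_map_add)
    moreover have "inj_on (\<lambda>d. restrict (g d) (topspace X)) D"
      using inj x0 by (auto simp: inj_on_def g_def dest!: fun_cong[where x = x0])
    moreover have "I_conv_zero_fun X D I g"
      using conv I_conv_zero_add_vanishing[OF assms(2) _ van_c]
      by (simp add: I_conv_zero_fun_def g_def)
    ultimately obtain A where A: "A \<in> dual_filter D I" "pointwise_conv_zero_on X A g"
      using assms(3) by blast
    have "vanishing_on A (\<lambda>d. - c d)"
      using A(1) assms(2) van_c by (auto simp: dual_filter_iff intro: vanishing_on_uminus vanishing_on_subset)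
    then have "pointwise_conv_zero_on X A f"
      using A(2) vanishing_on_add by (fastforce simp: pointwise_conv_zero_on_iff g_def)
    then show ?thesis using A(1) by blast
  qed
qed

end
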